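(* Let $\vec r_1,\vec r_2$ be in the closed unit ball of $\mathbb{R}^3$ and linearly dependent, with $r_i=|\vec r_i|$ and $m=\max\{r_1,r_2\}$. Then $$d^2_{\mathrm{symm},2}(\rho(\vec r_1),\rho(\vec r_2))=2\Big(|\vec r_1-\vec r_2|+\sqrt{1-r_1^2}+\sqrt{1-r_2^2}-2\sqrt{\big(1+\tfrac{\vec r_1\cdot\vec r_2}{m}\big)(1-m)}\Big),$$ with the convention that $\tfrac{\vec r_1\cdot\vec r_2}{m}=0$ when $m=0$.
   Context: Qubit setting: $\mathcal{H}=\mathbb{C}^2$, $\mathcal{H}^*$ is identified with $\mathbb{C}^2$ via the dual basis, and $A^T$ is the usual matrix transpose; operators on $\mathcal{H}\otimes\mathcal{H}^*$ are $4\times4$ matrices in the basis $e_1\otimes e_1^*,e_1\otimes e_2^*,e_2\otimes e_1^*,e_2\otimes e_2^*$. Pauli matrices: $\sigma_1=\sigma_x=\begin{pmatrix}0&1\\1&0\end{pmatrix}$, $\sigma_2=\sigma_y=\begin{pmatrix}0&-i\\i&0\end{pmatrix}$, $\sigma_3=\sigma_z=\begin{pmatrix}1&0\\0&-1\end{pmatrix}$, $\vec\sigma=(\sigma_1,\sigma_2,\sigma_3)$, and $\rho(\vec r)=\tfrac12(I+\vec r\cdot\vec\sigma)$ for $|\vec r|\le1$. The set of couplings of states $\rho,\omega$ is $\mathcal{C}(\rho,\omega)=\{\Pi\in\mathcal{S}(\mathcal{H}\otimes\mathcal{H}^* ):\mathrm{tr}_{\mathcal{H}^*}[\Pi]=\omega,\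 \mathrm{tr}_{\mathcal{H}}[\Pi]=\rho^T\}$. $C_{\mathrm{symm},2}=\sum_{k=1}^3(\sigma_k\otimes I^T-I\otimes\sigma_k^T)^2$, which equals the matrix $\begin{pmatrix}4&0&0&-4\\0&8&0&0\\0&0&8&0\\-4&0&0&4\end{pmatrix}$; $D^2_{\mathrm{symm},2}(\rho,\omega)=\min_{\Pi\in\mathcal{C}(\rho,\omega)}\mathrm{tr}[\Pi C_{\mathrm{symm},2}]$, and the quadratic Wasserstein divergence is $d_{\mathrm{symm},2}(\rho,\omega)=\big(D^2_{\mathrm{symm},2}(\rho,\omega)-\tfrac12(D^2_{\mathrm{symm},2}(\rho,\rho)+D^2_{\mathrm{symm},2}(\omega,\omega))\big)^{1/2}$. *)

theory Defs
  imports "HOL-Analysis.Analysis"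
begin

text \<open>Matrices are represented as functions nat => nat => complex, with entries
  outside the index range {0..<n} being irrelevant (we require them to be 0 for
  states).  For operators on H (x) H^*, the basis vector e_(a+1) (x) e_(b+1)^*
  (a, b in {0,1}) has index 2*a + b, matching the ordering of the paper.\<close>

type_synonym cmat = "nat \<Rightarrow> nat \<Rightarrow> complex"

definition mmult :: "nat \<Rightarrow> cmat \<Rightarrow> cmat \<Rightarrow> cmat" where
  "mmult n A B = (\<lambda>i j. \<Sum>k<n. A i k * B k j)"

definition mtrace :: "nat \<Rightarrow> cmat \<Rightarrow> complex" where
  "mtrace n A = (\<Sum>i<n. A i i)"

definition mtransp :: "cmat \<Rightarrow> cmat" where
  "mtransp A = (\<lambda>i j. A j i)"

definition id2 :: cmat where
  "id2 = (\<lambda>i j. if i < 2 \<and> j < 2 \<and> i = j then 1 else 0)"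

definition kron2 :: "cmat \<Rightarrow> cmat \<Rightarrow> cmat" where
  "kron2 A B = (\<lambda>i j. if i < 4 \<and> j < 4
      then A (i div 2) (j div 2) * B (i mod 2) (j mod 2) else 0)"

definition pauli :: "nat \<Rightarrow> cmat" where
  "pauli k = (\<lambda>i j.
     if i < 2 \<and> j < 2 then
       (if k = 1 then (if i \<noteq> j then 1 else 0)
        else if k = 2 then (if i = 0 \<and> j = 1 then - \<i> else if i = 1 \<and> j = 0 then \<i> else 0)
        else if k = 3 then (if i = j then (if i = 0 then 1 else -1) else 0)
        else 0)
     else 0)"

definition bloch :: "real^3 \<Rightarrow> cmat" where
  "bloch r = (\<lambda>i j. (id2 i j + complex_of_real (r$1) * pauli 1 i j
                         + complex_of_real (r$2) * pauli 2 i j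
                         + complex_of_real (r$3) * pauli 3 i j) / 2)"

definition is_state :: "nat \<Rightarrow> cmat \<Rightarrow> bool" where
  "is_state n A \<longleftrightarrow>
     (\<forall>i j. \<not> (i < n \<and> j < n) \<longrightarrow> A i j = 0) \<and>
     (\<forall>i<n. \<forall>j<n. A j i = cnj (A i j)) \<and>
     (\<forall>v :: nat \<Rightarrow> complex. 0 \<le> Re (\<Sum>i<n. \<Sum>j<n. cnj (v i) * A i j * v j)) \<and>
     mtrace n A = 1"

definition ptrace_Hstar :: "cmat \<Rightarrow> cmat" where
  "ptrace_Hstar P = (\<lambda>a a'. if a < 2 \<and> a' < 2 then (\<Sum>b<2. P (2*a+b) (2*a'+b)) else 0)"

definition ptrace_H :: "cmat \<Rightarrow> cmat" where
  "ptrace_H P = (\<lambda>b b'. if b < 2 \<and> b' < 2 then (\<Sum>a<2. P (2*a+b) (2*a+b')) else 0)"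

definition couplings :: "cmat \<Rightarrow> cmat \<Rightarrow> cmat set" where
  "couplings \<rho> \<omega> = {P. is_state 4 P \<and> ptrace_Hstar P = \<omega> \<and> ptrace_H P = mtransp \<rho>}"

definition C_symm2 :: cmat where
  "C_symm2 = (\<lambda>i j. \<Sum>k\<in>{1,2,3::nat}.
      mmult 4 (\<lambda>p q. kron2 (pauli k) (mtransp id2) p q - kron2 id2 (mtransp (pauli k)) p q)
              (\<lambda>p q. kron2 (pauli k) (mtransp id2) p q - kron2 id2 (mtransp (pauli k)) p q) i j)"

definition D2_symm2 :: "cmat \<Rightarrow> cmat \<Rightarrow> real" where
  "D2_symm2 \<rho> \<omega> = Inf ((\<lambda>P. Re (mtrace 4 (mmult 4 P C_symm2))) ` couplings \<rho> \<omega>)"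

definition d_symm2 :: "cmat \<Rightarrow> cmat \<Rightarrow> real" where
  "d_symm2 \<rho> \<omega> = sqrt (D2_symm2 \<rho> \<omega> - (D2_symm2 \<rho> \<rho> + D2_symm2 \<omega> \<omega>) / 2)"

end

theory Submission
  imports Defs
begin

text \<open>
  On trace-one operators the cost is C_symm2 = 8 - 4 |\<Omega>\<rangle>\<langle>\<Omega>| with
  \<Omega> = e_1 \<otimes> e_1^* + e_2 \<otimes> e_2^*, so computing D^2 means maximising \<langle>\<Omega>|\<Pi>|\<Omega>\<rangle>
  over couplings.  Linearly dependent Bloch vectors are a n and b n with |n| = 1, and we may
  assume a \<le> b; write a = 2 s^2 - 1 and b = 1 - 2 t^2 with s, t \<ge> 0.  Reading an operator A
  on H as a vector |A\<rangle> of H \<otimes> H^*, the plan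
    |s \<rho>(n) + t \<rho>(-n)\<rangle>\<langle>s \<rho>(n) + t \<rho>(-n)| + (1 - s^2 - t^2) \<rho>(n) \<otimes> \<rho>(-n)^T
  couples \<rho>(a n) with \<rho>(b n) and has \<langle>\<Omega>|\<Pi>|\<Omega>\<rangle> = (s + t)^2.  Conversely, for every \<lambda> > 0
  the operator
    (1 + \<lambda>) \<rho>(-n) \<otimes> I + \<lambda> (1 + \<lambda>) I \<otimes> \<rho>(n)^T - \<lambda> |\<Omega>\<rangle>\<langle>\<Omega>|
  is a sum of positive rank-one operators (a feasible point of the dual problem), so pairing it
  with a coupling, which only involves the marginals, gives
  \<lambda> \<langle>\<Omega>|\<Pi>|\<Omega>\<rangle> \<le> (1 + \<lambda>) t^2 + \<lambda> (1 + \<lambda>) s^2, and optimising over \<lambda> yields (s + t)^2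
  again.  Hence D^2 = 8 - 4 (s + t)^2; the formula for the divergence is then algebra, the
  quantity under its square root being nonnegative.
\<close>

lemma sum_lessThan_2: "(\<Sum>i<(2::nat). f i) = f 0 + (f 1::'a::comm_monoid_add)"
  by (simp add: eval_nat_numeral)

lemma sum_lessThan_4: "(\<Sum>i<(4::nat). f i) = f 0 + f 1 + f 2 + (f 3::'a::comm_monoid_add)"
  by (simp add: eval_nat_numeral)

lemma nat_less_4_iff: "(i::nat) < 4 \<longleftrightarrow> i = 0 \<or> i = 1 \<or> i = 2 \<or> i = 3" by auto

lemma nat_less_2_iff: "(i::nat) < 2 \<longleftrightarrow> i = 0 \<or> i = 1" by auto

lemma bloch_entries:
  "bloch r 0 0 = Complex ((1 + r$3)/2) 0"
  "bloch r 0 1 = Complex (r$1/2) (- r$2/2)"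
  "bloch r 1 0 = Complex (r$1/2) (r$2/2)"
  "bloch r 1 1 = Complex ((1 - r$3)/2) 0"
  "bloch r 0 (Suc 0) = Complex (r$1/2) (- r$2/2)"
  "bloch r (Suc 0) 0 = Complex (r$1/2) (r$2/2)"
  "bloch r (Suc 0) (Suc 0) = Complex ((1 - r$3)/2) 0"
  by (simp_all add: bloch_def id2_def pauli_def complex_eq_iff)

text \<open>The second form matches the right-nested products left by \<open>algebra_simps\<close>.\<close>

lemma unit_vec3_coord_sq:
  assumes "norm (n::real^3) = 1"
  shows "n$1 * n$1 = 1 - n$2 * n$2 - n$3 * n$3"
    and "n$1 * (n$1 * w) = (1 - n$2 * n$2 - n$3 * n$3) * w"
proof -
  have "n \<bullet> n = 1" using assms by (metis norm_eq_1)
  then show "n$1 * n$1 = 1 - n$2 * n$2 - n$3 * n$3"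
    by (simp add: inner_vec_def sum_3)
  then show "n$1 * (n$1 * w) = (1 - n$2 * n$2 - n$3 * n$3) * w"
    by (metis mult.assoc)
qed

lemma mtrace_mmult_transp: "mtrace n (mmult n (mtransp A) (mtransp B)) = mtrace n (mmult n B A)"
  unfolding mtrace_def mmult_def mtransp_def by (simp add: mult.commute)

lemma mtrace_mmult_add_scale:
  "mtrace n (mmult n P (\<lambda>i j. A i j + c * B i j)) =
     mtrace n (mmult n P A) + c * mtrace n (mmult n P B)"
  by (simp add: mtrace_def mmult_def distrib_left sum.distrib sum_distrib_left mult_ac)

lemma mtrace_mmult_lincomb:
  "mtrace n (mmult n P (\<lambda>i j. a * A i j + b * B i j - c * C i j)) =
     a * mtrace n (mmult n P A) + b * mtrace n (mmult n P B) - c * mtrace n (mmult n P C)"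
  unfolding mtrace_def mmult_def
  by (simp add: right_diff_distrib distrib_left sum.distrib sum_subtractf sum_distrib_left
      mult.left_commute)

lemma mtrace_mmult_sum:
  "mtrace n (mmult n P (\<lambda>i j. \<Sum>a\<in>S. F a i j)) = (\<Sum>a\<in>S. mtrace n (mmult n P (F a)))"
  unfolding mtrace_def mmult_def sum_distrib_left
  by (simp add: sum.swap[where A = S])

lemma mtrace_mmult_bloch: "mtrace 2 (mmult 2 (bloch r) (bloch m)) = of_real ((1 + r \<bullet> m) / 2)"
  by (simp add: mtrace_def mmult_def sum_lessThan_2 bloch_entries complex_eq_iff inner_vec_def sum_3
      field_simps)

text \<open>An operator A on H, read as the vector \<Sum> A_ab e_a \<otimes> e_b^* of H \<otimes> H^*.\<close>

definition vec_op :: "cmat \<Rightarrow> nat \<Rightarrow> complex" where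
  "vec_op A k = A (k div 2) (k mod 2)"

definition ket_bra :: "(nat \<Rightarrow> complex) \<Rightarrow> cmat" where
  "ket_bra v = (\<lambda>i j. if i < 4 \<and> j < 4 then v i * cnj (v j) else 0)"

definition qform :: "cmat \<Rightarrow> (nat \<Rightarrow> complex) \<Rightarrow> complex" where
  "qform P v = (\<Sum>i<4. \<Sum>j<4. cnj (v i) * P i j * v j)"

definition omega_vec :: "nat \<Rightarrow> complex" where
  "omega_vec = vec_op id2"

lemma qform_add_scale:
  "qform (\<lambda>i j. A i j + c * B i j) v = qform A v + c * qform B v"
  by (simp add: qform_def algebra_simps sum.distrib sum_distrib_left)

lemma qform_sum:
  "qform (\<lambda>i j. \<Sum>a\<in>S. F a i j) v = (\<Sum>a\<in>S. qform (F a) v)"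
  unfolding qform_def sum_distrib_left sum_distrib_right
  by (simp add: sum.swap[where A = S])

lemma mtrace_mmult_ket_bra: "mtrace 4 (mmult 4 P (ket_bra v)) = qform P v"
  unfolding mtrace_def mmult_def qform_def ket_bra_def
  by (simp add: sum_distrib_left mult_ac)

lemma qform_ket_bra: "qform (ket_bra v) w = of_real ((cmod (\<Sum>i<4. cnj (w i) * v i))\<^sup>2)"
proof -
  have "of_real ((cmod (\<Sum>i<4. cnj (w i) * v i))\<^sup>2) =
      (\<Sum>i<4. cnj (w i) * v i) * (\<Sum>j<4. w j * cnj (v j))"
    unfolding complex_norm_square by simp
  then show ?thesis
    by (simp add: qform_def ket_bra_def sum_product mult_ac)
qed

lemma mtrace_mmult_kron_id:
  "mtrace 4 (mmult 4 P (kron2 A id2)) = mtrace 2 (mmult 2 (ptrace_Hstar P) A)"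
  by (simp add: mtrace_def mmult_def kron2_def id2_def ptrace_Hstar_def sum_lessThan_4 sum_lessThan_2)
    (simp add: numeral_eq_Suc algebra_simps)

lemma mtrace_mmult_id_kron:
  "mtrace 4 (mmult 4 P (kron2 id2 B)) = mtrace 2 (mmult 2 (ptrace_H P) B)"
  by (simp add: mtrace_def mmult_def kron2_def id2_def ptrace_H_def sum_lessThan_4 sum_lessThan_2)
    (simp add: numeral_eq_Suc algebra_simps)

lemma C_symm2_eq:
  assumes "i < 4" "j < 4"
  shows "C_symm2 i j = (if i = j then 8 else 0) - 4 * ket_bra omega_vec i j"
  using assms unfolding nat_less_4_iff
  by (elim disjE; simp add: C_symm2_def mmult_def sum_lessThan_4 kron2_def pauli_def id2_def
      mtransp_def ket_bra_def omega_vec_def vec_op_def)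

lemma mtrace_mmult_C_symm2:
  "mtrace 4 (mmult 4 P C_symm2) = 8 * mtrace 4 P - 4 * qform P omega_vec"
proof -
  have "mtrace 4 (mmult 4 P C_symm2) =
      (\<Sum>i<4. \<Sum>k<4. P i k * ((if k = i then 8 else 0) - 4 * ket_bra omega_vec k i))"
    unfolding mtrace_def mmult_def by (intro sum.cong refl) (simp add: C_symm2_eq)
  then show ?thesis
    by (simp add: sum_lessThan_4 mtrace_def qform_def ket_bra_def omega_vec_def vec_op_def id2_def
        algebra_simps)
qed

lemma cost_C_symm2:
  assumes "mtrace 4 P = 1"
  shows "Re (mtrace 4 (mmult 4 P C_symm2)) = 8 - 4 * Re (qform P omega_vec)"
  unfolding mtrace_mmult_C_symm2 assms by simp

definition gram_op :: "(nat \<Rightarrow> complex) \<Rightarrow> real \<Rightarrow> (nat \<Rightarrow> nat \<Rightarrow> nat \<Rightarrow> complex) \<Rightarrow> cmat" where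
  "gram_op v c u = (\<lambda>i j. ket_bra v i j + of_real c * (\<Sum>a<2. \<Sum>b<2. ket_bra (u a b) i j))"

lemma gram_op_entry:
  "i < 4 \<Longrightarrow> j < 4 \<Longrightarrow>
    gram_op v c u i j = v i * cnj (v j) + of_real c * (\<Sum>a<2. \<Sum>b<2. u a b i * cnj (u a b j))"
  by (simp add: gram_op_def ket_bra_def)

lemma gram_op_hermitian: "gram_op v c u j i = cnj (gram_op v c u i j)"
  by (simp add: gram_op_def ket_bra_def sum_lessThan_2 ac_simps)

lemma mtrace_mmult_gram_op:
  "mtrace 4 (mmult 4 P (gram_op v c u)) = qform P v + of_real c * (\<Sum>a<2. \<Sum>b<2. qform P (u a b))"
  unfolding gram_op_def mtrace_mmult_add_scale mtrace_mmult_sum mtrace_mmult_ket_bra ..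

lemma qform_gram_op:
  "qform (gram_op v c u) w = of_real ((cmod (\<Sum>i<4. cnj (w i) * v i))\<^sup>2
     + c * (\<Sum>a<2. \<Sum>b<2. (cmod (\<Sum>i<4. cnj (w i) * u a b i))\<^sup>2))"
  unfolding gram_op_def qform_add_scale qform_sum qform_ket_bra by simp

lemma qform_gram_op_nonneg:
  assumes "0 \<le> c"
  shows "0 \<le> Re (qform (gram_op v c u) w)"
  unfolding qform_gram_op using assms by (simp add: sum_nonneg)

lemma gram_op_is_state:
  assumes "0 \<le> c" and "mtrace 4 (gram_op v c u) = 1"
  shows "is_state 4 (gram_op v c u)"
proof -
  have "\<forall>i j. \<not> (i < 4 \<and> j < 4) \<longrightarrow> gram_op v c u i j = 0"
    by (auto simp: gram_op_def ket_bra_def)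
  moreover have "\<forall>w. 0 \<le> Re (\<Sum>i<4. \<Sum>j<4. cnj (w i) * gram_op v c u i j * w j)"
    using qform_gram_op_nonneg[OF assms(1)] unfolding qform_def by blast
  ultimately show ?thesis
    unfolding is_state_def using gram_op_hermitian assms(2) by blast
qed

definition cross_vec :: "real^3 \<Rightarrow> nat \<Rightarrow> nat \<Rightarrow> nat \<Rightarrow> complex" where
  "cross_vec n a b = vec_op (\<lambda>i j. bloch n i a * bloch (-n) b j)"

text \<open>
  For a unit vector, \<rho>(n) and \<rho>(-n) are complementary rank-one projections; summing over the
  basis indices a, b avoids choosing eigenvectors.
\<close>

lemma kron_bloch_antipodal:
  assumes "norm n = 1"
  shows "kron2 (bloch n) (mtransp (bloch (-n))) = (\<lambda>i j. \<Sum>a<2. \<Sum>b<2. ket_bra (cross_vec n a b) i j)"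
proof (intro ext)
  fix i j :: nat
  show "kron2 (bloch n) (mtransp (bloch (-n))) i j = (\<Sum>a<2. \<Sum>b<2. ket_bra (cross_vec n a b) i j)"
  proof (cases "i < 4 \<and> j < 4")
    case True
    then show ?thesis unfolding nat_less_4_iff
      apply (elim conjE disjE; hypsubst_thin)
      apply (simp_all add: kron2_def mtransp_def ket_bra_def cross_vec_def vec_op_def sum_lessThan_2
          bloch_entries complex_eq_iff)
      apply (simp_all add: field_simps power2_eq_square)
      apply (simp_all add: algebra_simps unit_vec3_coord_sq[OF assms])
      done
  qed (auto simp: kron2_def ket_bra_def)
qed

definition dual_witness :: "real \<Rightarrow> real^3 \<Rightarrow> cmat" where
  "dual_witness l n = (\<lambda>i j. of_real (1 + l) * kron2 (bloch (-n)) id2 i j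
     + of_real (l * (1 + l)) * kron2 id2 (mtransp (bloch n)) i j - of_real l * ket_bra omega_vec i j)"

lemma dual_witness_gram:
  assumes "norm n = 1"
  shows "dual_witness l n =
    gram_op (vec_op (\<lambda>i j. of_real l * bloch n i j - bloch (-n) i j)) ((1 + l)\<^sup>2) (cross_vec (-n))"
proof (intro ext)
  fix i j :: nat
  show "dual_witness l n i j =
    gram_op (vec_op (\<lambda>i j. of_real l * bloch n i j - bloch (-n) i j)) ((1 + l)\<^sup>2) (cross_vec (-n)) i j"
  proof (cases "i < 4 \<and> j < 4")
    case True
    then show ?thesis unfolding nat_less_4_iff
      apply (elim conjE disjE; hypsubst_thin)
      apply (simp_all add: dual_witness_def gram_op_entry kron2_def id2_def mtransp_def ket_bra_def
          omega_vec_def cross_vec_def vec_op_def sum_lessThan_2 bloch_entries complex_eq_iff)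
      apply (simp_all add: field_simps power2_eq_square)
      apply (simp_all add: algebra_simps unit_vec3_coord_sq[OF assms])
      done
  qed (auto simp: dual_witness_def gram_op_def kron2_def ket_bra_def)
qed

lemma mtrace_mmult_dual_witness:
  "mtrace 4 (mmult 4 P (dual_witness l n)) =
     of_real (1 + l) * mtrace 2 (mmult 2 (ptrace_Hstar P) (bloch (-n)))
     + of_real (l * (1 + l)) * mtrace 2 (mmult 2 (ptrace_H P) (mtransp (bloch n)))
     - of_real l * qform P omega_vec"
  unfolding dual_witness_def mtrace_mmult_lincomb mtrace_mmult_kron_id mtrace_mmult_id_kron
    mtrace_mmult_ket_bra ..

lemma coupling_overlap_le:
  assumes n: "norm n = 1" and l: "0 < l" and P: "P \<in> couplings (bloch r1) (bloch r2)"
  shows "l * Re (qform P omega_vec) \<le>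
    (1 + l) * ((1 - r2 \<bullet> n) / 2) + l * (1 + l) * ((1 + r1 \<bullet> n) / 2)"
proof -
  from P have psd: "0 \<le> Re (qform P v)" for v
    unfolding couplings_def is_state_def qform_def by blast
  from P have marginals: "ptrace_Hstar P = bloch r2" "ptrace_H P = mtransp (bloch r1)"
    by (auto simp: couplings_def)
  have "0 \<le> Re (mtrace 4 (mmult 4 P (dual_witness l n)))"
    unfolding dual_witness_gram[OF n] mtrace_mmult_gram_op using psd by (simp add: sum_lessThan_2)
  also have "\<dots> = (1 + l) * ((1 - r2 \<bullet> n) / 2) + l * (1 + l) * ((1 + r1 \<bullet> n) / 2)
      - l * Re (qform P omega_vec)"
    unfolding mtrace_mmult_dual_witness marginals mtrace_mmult_transp mtrace_mmult_bloch
    by (simp add: inner_commute[of n r1])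
  finally show ?thesis by simp
qed

definition transport_plan :: "real \<Rightarrow> real \<Rightarrow> real^3 \<Rightarrow> cmat" where
  "transport_plan s t n = (\<lambda>i j.
     ket_bra (vec_op (\<lambda>a b. of_real s * bloch n a b + of_real t * bloch (-n) a b)) i j
     + of_real (1 - s\<^sup>2 - t\<^sup>2) * kron2 (bloch n) (mtransp (bloch (-n))) i j)"

lemma transport_plan_gram:
  assumes "norm n = 1"
  shows "transport_plan s t n =
    gram_op (vec_op (\<lambda>a b. of_real s * bloch n a b + of_real t * bloch (-n) a b))
      (1 - s\<^sup>2 - t\<^sup>2) (cross_vec n)"
  unfolding transport_plan_def gram_op_def kron_bloch_antipodal[OF assms] ..

lemma transport_plan_trace:
  assumes "norm n = 1"
  shows "mtrace 4 (transport_plan s t n) = 1"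
  unfolding transport_plan_gram[OF assms]
  apply (simp add: mtrace_def gram_op_def sum_lessThan_4 sum_lessThan_2 ket_bra_def vec_op_def cross_vec_def
      bloch_entries complex_eq_iff)
  apply (simp add: field_simps power2_eq_square)
  apply (simp add: algebra_simps unit_vec3_coord_sq[OF assms])
  done

lemma transport_plan_overlap:
  assumes "norm n = 1"
  shows "qform (transport_plan s t n) omega_vec = of_real ((s + t)\<^sup>2)"
proof -
  have "(\<Sum>i<4. cnj (omega_vec i) * vec_op (\<lambda>a b. of_real s * bloch n a b + of_real t * bloch (-n) a b) i)
      = of_real (s + t)"
    by (simp add: sum_lessThan_4 omega_vec_def vec_op_def id2_def bloch_entries complex_eq_iff
        field_simps)
  moreover have "(\<Sum>i<4. cnj (omega_vec i) * cross_vec n a b i) = 0" if "a < 2" "b < 2" for a b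
    using that unfolding nat_less_2_iff
    apply (elim disjE; hypsubst_thin)
    apply (simp_all add: sum_lessThan_4 omega_vec_def vec_op_def id2_def cross_vec_def bloch_entries
        complex_eq_iff)
    apply (simp_all add: field_simps power2_eq_square)
    apply (simp_all add: algebra_simps unit_vec3_coord_sq[OF assms])
    done
  ultimately show ?thesis
    unfolding transport_plan_gram[OF assms] qform_gram_op
    by (simp add: sum_lessThan_2 power2_abs flip: of_real_add)
qed

lemma transport_plan_ptrace_Hstar:
  assumes "norm n = 1"
  shows "ptrace_Hstar (transport_plan s t n) = bloch ((1 - 2 * t\<^sup>2) *\<^sub>R n)"
proof (intro ext)
  fix a a' :: nat
  show "ptrace_Hstar (transport_plan s t n) a a' = bloch ((1 - 2 * t\<^sup>2) *\<^sub>R n) a a'"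
  proof (cases "a < 2 \<and> a' < 2")
    case True
    then show ?thesis unfolding nat_less_2_iff transport_plan_gram[OF assms]
      apply (elim conjE disjE; hypsubst_thin)
      apply (simp_all add: ptrace_Hstar_def gram_op_entry sum_lessThan_2 vec_op_def cross_vec_def
          bloch_entries complex_eq_iff)
      apply (simp_all add: field_simps power2_eq_square)
      apply (simp_all add: algebra_simps unit_vec3_coord_sq[OF assms])
      done
  qed (auto simp: ptrace_Hstar_def bloch_def id2_def pauli_def)
qed

lemma transport_plan_ptrace_H:
  assumes "norm n = 1"
  shows "ptrace_H (transport_plan s t n) = mtransp (bloch ((2 * s\<^sup>2 - 1) *\<^sub>R n))"
proof (intro ext)
  fix b b' :: nat
  show "ptrace_H (transport_plan s t n) b b' = mtransp (bloch ((2 * s\<^sup>2 - 1) *\<^sub>R n)) b b'"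
  proof (cases "b < 2 \<and> b' < 2")
    case True
    then show ?thesis unfolding nat_less_2_iff transport_plan_gram[OF assms]
      apply (elim conjE disjE; hypsubst_thin)
      apply (simp_all add: ptrace_H_def mtransp_def gram_op_entry sum_lessThan_2 vec_op_def cross_vec_def
          bloch_entries complex_eq_iff)
      apply (simp_all add: field_simps power2_eq_square)
      apply (simp_all add: algebra_simps unit_vec3_coord_sq[OF assms])
      done
  qed (auto simp: ptrace_H_def mtransp_def bloch_def id2_def pauli_def)
qed

lemma transport_plan_coupling:
  assumes "norm n = 1" and "s\<^sup>2 + t\<^sup>2 \<le> 1"
  shows "transport_plan s t n \<in> couplings (bloch ((2 * s\<^sup>2 - 1) *\<^sub>R n)) (bloch ((1 - 2 * t\<^sup>2) *\<^sub>R n))"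
proof -
  have "is_state 4 (transport_plan s t n)"
    using gram_op_is_state transport_plan_trace[OF assms(1)] assms(2)
    unfolding transport_plan_gram[OF assms(1)] by simp
  then show ?thesis
    unfolding couplings_def
    using transport_plan_ptrace_Hstar[OF assms(1)] transport_plan_ptrace_H[OF assms(1)] by simp
qed

text \<open>
  The bound is optimal at l = t / s; perturbing s and t by e avoids the degenerate cases s = 0
  and t = 0.
\<close>

lemma le_square_sum_if_weighted_bounds:
  fixes G s t :: real
  assumes "0 \<le> s" "0 \<le> t" and bound: "\<And>l. 0 < l \<Longrightarrow> G \<le> (1 + 1 / l) * t\<^sup>2 + (1 + l) * s\<^sup>2"
  shows "G \<le> (s + t)\<^sup>2"
proof (rule tendsto_lowerbound)
  show "((\<lambda>e. (s + t + 2 * e)\<^sup>2) \<longlongrightarrow> (s + t)\<^sup>2) (at_right 0)"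
    by (auto intro!: tendsto_eq_intros)
  show "\<forall>\<^sub>F e in at_right 0. G \<le> (s + t + 2 * e)\<^sup>2"
  proof (rule eventually_mono[OF eventually_at_right_less])
    fix e :: real
    assume e: "0 < e"
    let ?l = "(t + e) / (s + e)"
    have "0 < s + e" "0 < t + e" using assms e by simp_all
    then have "0 < ?l" by simp
    then have "G \<le> (1 + 1 / ?l) * t\<^sup>2 + (1 + ?l) * s\<^sup>2"
      by (rule bound)
    also have "\<dots> \<le> (1 + 1 / ?l) * (t + e)\<^sup>2 + (1 + ?l) * (s + e)\<^sup>2"
      using assms e by (intro add_mono mult_left_mono power_mono) auto
    also have "\<dots> = (s + t + 2 * e) * (t + e) + (s + t + 2 * e) * (s + e)"
    proof -
      have "1 + 1 / ?l = (s + t + 2 * e) / (t + e)" "1 + ?l = (s + t + 2 * e) / (s + e)"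
        using \<open>0 < s + e\<close> \<open>0 < t + e\<close> by (simp_all add: field_simps)
      then show ?thesis
        using \<open>0 < s + e\<close> \<open>0 < t + e\<close> by (simp add: power2_eq_square)
    qed
    also have "\<dots> = (s + t + 2 * e)\<^sup>2"
      by (simp add: power2_eq_square algebra_simps)
    finally show "G \<le> (s + t + 2 * e)\<^sup>2" .
  qed
qed simp

lemma coupling_cost_ge:
  assumes n: "norm n = 1" and "0 \<le> s" "0 \<le> t"
    and P: "P \<in> couplings (bloch ((2 * s\<^sup>2 - 1) *\<^sub>R n)) (bloch ((1 - 2 * t\<^sup>2) *\<^sub>R n))"
  shows "8 - 4 * (s + t)\<^sup>2 \<le> Re (mtrace 4 (mmult 4 P C_symm2))"
proof -
  have "n \<bullet> n = 1" using n by (metis norm_eq_1)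
  have "Re (qform P omega_vec) \<le> (1 + 1 / l) * t\<^sup>2 + (1 + l) * s\<^sup>2" if l: "0 < l" for l
  proof -
    have "l * Re (qform P omega_vec) \<le> (1 + l) * t\<^sup>2 + l * (1 + l) * s\<^sup>2"
      using coupling_overlap_le[OF n l P] unfolding inner_scaleR_left \<open>n \<bullet> n = 1\<close> by simp
    also have "\<dots> = l * ((1 + 1 / l) * t\<^sup>2 + (1 + l) * s\<^sup>2)"
      using l by (simp add: field_simps)
    finally show ?thesis using l by simp
  qed
  then have "Re (qform P omega_vec) \<le> (s + t)\<^sup>2"
    using le_square_sum_if_weighted_bounds assms(2,3) by blast
  moreover have "mtrace 4 P = 1" using P by (simp add: couplings_def is_state_def)
  ultimately show ?thesis using cost_C_symm2 by simp
qed

lemma D2_symm2_collinear_param: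
  assumes n: "norm n = 1" and "0 \<le> s" "0 \<le> t" and st: "s\<^sup>2 + t\<^sup>2 \<le> 1"
  shows "D2_symm2 (bloch ((2 * s\<^sup>2 - 1) *\<^sub>R n)) (bloch ((1 - 2 * t\<^sup>2) *\<^sub>R n)) = 8 - 4 * (s + t)\<^sup>2"
  unfolding D2_symm2_def
proof (rule cInf_eq_minimum)
  have "8 - 4 * (s + t)\<^sup>2 = Re (mtrace 4 (mmult 4 (transport_plan s t n) C_symm2))"
    using cost_C_symm2[OF transport_plan_trace[OF n]] transport_plan_overlap[OF n] by simp
  then show "8 - 4 * (s + t)\<^sup>2 \<in> (\<lambda>P. Re (mtrace 4 (mmult 4 P C_symm2))) `
      couplings (bloch ((2 * s\<^sup>2 - 1) *\<^sub>R n)) (bloch ((1 - 2 * t\<^sup>2) *\<^sub>R n))"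
    using transport_plan_coupling[OF n st] by blast
qed (use coupling_cost_ge[OF assms(1-3)] in blast)

lemma D2_symm2_collinear_le:
  assumes n: "norm n = 1" and ab: "-1 \<le> a" "a \<le> b" "b \<le> 1"
  shows "D2_symm2 (bloch (a *\<^sub>R n)) (bloch (b *\<^sub>R n)) = 4 + 2 * (b - a) - 4 * sqrt ((1 + a) * (1 - b))"
proof -
  define s where "s = sqrt ((1 + a) / 2)"
  define t where "t = sqrt ((1 - b) / 2)"
  have s2: "s\<^sup>2 = (1 + a) / 2" and t2: "t\<^sup>2 = (1 - b) / 2"
    unfolding s_def t_def using ab by simp_all
  have "0 \<le> s" "0 \<le> t" unfolding s_def t_def using ab by simp_all
  have st: "s * t = sqrt ((1 + a) * (1 - b)) / 2"
    unfolding s_def t_def by (simp add: real_sqrt_mult[symmetric] real_sqrt_divide)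
  have "2 * s\<^sup>2 - 1 = a" "1 - 2 * t\<^sup>2 = b" "s\<^sup>2 + t\<^sup>2 \<le> 1"
    unfolding s2 t2 using ab by (simp_all add: field_simps)
  then have "D2_symm2 (bloch (a *\<^sub>R n)) (bloch (b *\<^sub>R n)) = 8 - 4 * (s + t)\<^sup>2"
    using D2_symm2_collinear_param[OF n \<open>0 \<le> s\<close> \<open>0 \<le> t\<close>] by simp
  also have "\<dots> = 4 + 2 * (b - a) - 4 * sqrt ((1 + a) * (1 - b))"
    unfolding power2_sum s2 t2 mult.assoc st by (simp add: field_simps)
  finally show ?thesis .
qed

lemma collinear_divergence_nonneg:
  fixes a b :: real
  assumes "-1 \<le> a" "a \<le> b" "b \<le> 1"
  shows "0 \<le> 2 * (b - a) + 2 * sqrt ((1 + a) * (1 - a)) + 2 * sqrt ((1 + b) * (1 - b))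
              - 4 * sqrt ((1 + a) * (1 - b))"
proof -
  define A A' B B' where "A = sqrt (1 + a)" "A' = sqrt (1 - a)" "B = sqrt (1 + b)" "B' = sqrt (1 - b)"
  have "A\<^sup>2 = 1 + a" "B\<^sup>2 = 1 + b"
    unfolding A_A'_B_B'_def using assms by simp_all
  have "0 \<le> A" "0 \<le> B'" "A \<le> B" "B' \<le> A'"
    unfolding A_A'_B_B'_def using assms by simp_all
  then have "0 \<le> (B - A) * (B + A) + A * (A' - B') + B' * (B - A)"
    by (intro add_nonneg_nonneg mult_nonneg_nonneg) auto
  also have "\<dots> = (b - a) + sqrt ((1 + a) * (1 - a)) + sqrt ((1 + b) * (1 - b))
      - 2 * sqrt ((1 + a) * (1 - b))"
    using \<open>A\<^sup>2 = 1 + a\<close> \<open>B\<^sup>2 = 1 + b\<close>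
    unfolding A_A'_B_B'_def real_sqrt_mult by (simp add: algebra_simps power2_eq_square)
  finally show ?thesis by simp
qed

lemma d_symm2_sq_collinear_le:
  assumes n: "norm n = 1" and ab: "-1 \<le> a" "a \<le> b" "b \<le> 1"
  shows "(d_symm2 (bloch (a *\<^sub>R n)) (bloch (b *\<^sub>R n)))\<^sup>2 =
    2 * (b - a) + 2 * sqrt (1 - a\<^sup>2) + 2 * sqrt (1 - b\<^sup>2) - 4 * sqrt ((1 + a) * (1 - b))"
proof -
  have one_minus_sq: "(1 + x) * (1 - x) = 1 - x\<^sup>2" for x :: real
    by (simp add: algebra_simps power2_eq_square)
  then have "D2_symm2 (bloch (a *\<^sub>R n)) (bloch (b *\<^sub>R n))
      - (D2_symm2 (bloch (a *\<^sub>R n)) (bloch (a *\<^sub>R n))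
         + D2_symm2 (bloch (b *\<^sub>R n)) (bloch (b *\<^sub>R n))) / 2
    = 2 * (b - a) + 2 * sqrt (1 - a\<^sup>2) + 2 * sqrt (1 - b\<^sup>2) - 4 * sqrt ((1 + a) * (1 - b))"
    using ab by (simp add: D2_symm2_collinear_le[OF n] field_simps)
  moreover have "0 \<le> 2 * (b - a) + 2 * sqrt (1 - a\<^sup>2) + 2 * sqrt (1 - b\<^sup>2) - 4 * sqrt ((1 + a) * (1 - b))"
    using collinear_divergence_nonneg[OF ab] one_minus_sq by simp
  ultimately show ?thesis
    unfolding d_symm2_def by simp
qed

lemma d_symm2_sq_collinear:
  assumes n: "norm n = 1" and "\<bar>a\<bar> \<le> 1" "\<bar>b\<bar> \<le> 1"
  shows "(d_symm2 (bloch (a *\<^sub>R n)) (bloch (b *\<^sub>R n)))\<^sup>2 =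
    2 * \<bar>a - b\<bar> + 2 * sqrt (1 - a\<^sup>2) + 2 * sqrt (1 - b\<^sup>2) - 4 * sqrt ((1 + min a b) * (1 - max a b))"
proof (cases "a \<le> b")
  case True
  then show ?thesis
    using d_symm2_sq_collinear_le[OF n, of a b] assms by (simp add: abs_le_iff)
next
  case False
  have "norm (-n) = 1" using n by simp
  from d_symm2_sq_collinear_le[OF this, of "-a" "-b"] False assms
  show ?thesis by (simp add: abs_le_iff mult.commute)
qed

lemma dependent_imp_multiples_of_unit:
  fixes r1 r2 :: "'a::euclidean_space"
  assumes "\<exists>a b :: real. (a \<noteq> 0 \<or> b \<noteq> 0) \<and> a *\<^sub>R r1 + b *\<^sub>R r2 = 0"
  shows "\<exists>n a b. norm n = 1 \<and> r1 = a *\<^sub>R n \<and> r2 = b *\<^sub>R n"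
proof -
  have unit_direction: "\<exists>n. norm n = 1 \<and> x = norm x *\<^sub>R n" for x :: 'a
  proof (cases "x = 0")
    case True
    obtain u :: 'a where "u \<in> Basis" using nonempty_Basis by blast
    then show ?thesis using True by (intro exI[of _ u]) simp
  next
    case False
    then show ?thesis by (intro exI[of _ "sgn x"]) (simp add: norm_sgn sgn_div_norm)
  qed
  obtain \<alpha> \<beta> where nontriv: "\<alpha> \<noteq> 0 \<or> \<beta> \<noteq> 0" and rel: "\<alpha> *\<^sub>R r1 + \<beta> *\<^sub>R r2 = 0"
    using assms by blast
  show ?thesis
  proof (cases "\<beta> = 0")
    case True
    then have "r1 = 0" using nontriv rel by simp
    with unit_direction[of r2] show ?thesis by (metis scaleR_zero_left)
  next
    case False
    have "\<beta> *\<^sub>R r2 = - (\<alpha> *\<^sub>R r1)"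
      using rel by (simp add: eq_neg_iff_add_eq_0 add.commute)
    then have "r2 = (- \<alpha> / \<beta>) *\<^sub>R r1"
      using False by (metis divide_inverse_commute scaleR_minus_left scaleR_scaleR scaleR_one
          left_inverse)
    with unit_direction[of r1] show ?thesis by (metis scaleR_scaleR)
  qed
qed

text \<open>The left-hand side is (1 + q) (1 - m) of the statement for r1 = a n, r2 = b n with |n| = 1.\<close>

lemma q_m_term_eq_min_max:
  fixes a b :: real
  shows "(1 + (if max \<bar>a\<bar> \<bar>b\<bar> = 0 then 0 else a * b / max \<bar>a\<bar> \<bar>b\<bar>)) * (1 - max \<bar>a\<bar> \<bar>b\<bar>)
    = (1 + min a b) * (1 - max a b)"
  by (cases "\<bar>b\<bar> \<le> \<bar>a\<bar>"; cases "0 \<le> a"; cases "0 \<le> b")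
     (auto simp: min_def max_def abs_if field_simps)

theorem corollary3p3:
  fixes r1 r2 :: "real^3"
  assumes "norm r1 \<le> 1" and "norm r2 \<le> 1"
    and "\<exists>a b :: real. (a \<noteq> 0 \<or> b \<noteq> 0) \<and> a *\<^sub>R r1 + b *\<^sub>R r2 = 0"
  shows "(let m = max (norm r1) (norm r2);
              q = (if m = 0 then 0 else (r1 \<bullet> r2) / m)
          in (d_symm2 (bloch r1) (bloch r2))\<^sup>2 =
             2 * (norm (r1 - r2) + sqrt (1 - (norm r1)\<^sup>2) + sqrt (1 - (norm r2)\<^sup>2)
                  - 2 * sqrt ((1 + q) * (1 - m))))"
proof -
  obtain n a b where n: "norm n = 1" and r: "r1 = a *\<^sub>R n" "r2 = b *\<^sub>R n"
    using dependent_imp_multiples_of_unit[OF assms(3)] by blast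
  have "n \<bullet> n = 1" using n by (metis norm_eq_1)
  then have norms: "norm r1 = \<bar>a\<bar>" "norm r2 = \<bar>b\<bar>" "r1 \<bullet> r2 = a * b" "norm (r1 - r2) = \<bar>a - b\<bar>"
    using n by (simp_all add: r flip: scaleR_diff_left)
  then have "\<bar>a\<bar> \<le> 1" "\<bar>b\<bar> \<le> 1" using assms(1,2) by simp_all
  then have "(d_symm2 (bloch r1) (bloch r2))\<^sup>2 =
      2 * \<bar>a - b\<bar> + 2 * sqrt (1 - a\<^sup>2) + 2 * sqrt (1 - b\<^sup>2) - 4 * sqrt ((1 + min a b) * (1 - max a b))"
    unfolding r by (rule d_symm2_sq_collinear[OF n])
  then show ?thesis
    unfolding Let_def norms power2_abs q_m_term_eq_min_max by simp
qed

end
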